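(* Let $A=\begin{bmatrix}0&B\\0&C\end{bmatrix}$ act on $\mathbb{C}^m\oplus\mathbb{C}^d$, with $B\in M_{m\times d}$, $C\in M_d$ and $B^*B+C^*C=I_d$, and let $D=I_d-C^*C$. Define $P_C(x,y)=\det(I-xC-yC^* )$ and $Q_C(x,y)=\det(I-xC-yC^*-xyD)$. Then for every $z\in\mathbb{C}\setminus\{0\}$ and $\theta\in\mathbb{R}$, $$\det(zI-e^{-i\theta}A-e^{i\theta}A^* )=z^{m+d}Q_C\!\left(\tfrac{e^{-i\theta}}{z},\tfrac{e^{i\theta}}{z}\right),\qquad \det(zI-e^{-i\theta}C-e^{i\theta}C^* )=z^{d}P_C\!\left(\tfrac{e^{-i\theta}}{z},\tfrac{e^{i\theta}}{z}\right).$$ Consequently: (i) $A$ has the Circularity property if and only if $Q_C(x,y)\in\mathbb{C}[xy]$ (i.e. $Q_C$ is a polynomial in the product $xy$ alone); (ii) $C$ has the Circularity property if and only if $P_C(x,y)\in\mathbb{C}[xy]$.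
   Context: For $X\in M_n(\mathbb{C})$, $H_X(\theta)=\frac12(e^{-i\theta}X+e^{i\theta}X^* )$; $X$ has the Circularity property if the spectrum of $H_X(\theta)$ is independent of $\theta\in\mathbb{R}$. *)

theory Defs
  imports Complex_Main "Jordan_Normal_Form.Spectral_Radius" "Jordan_Normal_Form.Schur_Decomposition"
begin

definition H_mat :: "complex mat \<Rightarrow> real \<Rightarrow> complex mat" where
  "H_mat X \<theta> = (1/2 :: complex) \<cdot>\<^sub>m (cis (-\<theta>) \<cdot>\<^sub>m X + cis \<theta> \<cdot>\<^sub>m mat_adjoint X)"

definition circularity :: "complex mat \<Rightarrow> bool" where
  "circularity X \<longleftrightarrow> (\<forall>\<theta>1 \<theta>2. spectrum (H_mat X \<theta>1) = spectrum (H_mat X \<theta>2))"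

definition P_C :: "complex mat \<Rightarrow> complex \<Rightarrow> complex \<Rightarrow> complex" where
  "P_C C x y = det (1\<^sub>m (dim_row C) - x \<cdot>\<^sub>m C - y \<cdot>\<^sub>m mat_adjoint C)"

definition D_C :: "complex mat \<Rightarrow> complex mat" where
  "D_C C = 1\<^sub>m (dim_row C) - mat_adjoint C * C"

definition Q_C :: "complex mat \<Rightarrow> complex \<Rightarrow> complex \<Rightarrow> complex" where
  "Q_C C x y = det (1\<^sub>m (dim_row C) - x \<cdot>\<^sub>m C - y \<cdot>\<^sub>m mat_adjoint C - (x * y) \<cdot>\<^sub>m D_C C)"

definition in_poly_xy :: "(complex \<Rightarrow> complex \<Rightarrow> complex) \<Rightarrow> bool" where
  "in_poly_xy f \<longleftrightarrow> (\<exists>q :: complex poly. \<forall>x y. f x y = poly q (x * y))"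

end

(*
  For z \<noteq> 0 the block z I_m of z I - a A - b A^* is invertible, and its Schur complement is
  z (I - x C - y C^* - x y B^* B) with x = a/z, y = b/z, and B^* B = I - C^* C = D.  The
  identity for C is a mere rescaling.

  Circularity of X means that the characteristic polynomial of H_X(\<theta>) does not depend on \<theta>:
  its roots do not, and by continuity in \<theta> their multiplicities cannot jump.  Through the
  identities this says R(e^{-i\<theta>} t, e^{i\<theta>} t) = R(t, t) for R = Q_C resp. P_C.  Such an R is constant
  on every hyperbola x y = t^2: for fixed t, w^d R(w, t^2/w) is a polynomial in w that agrees with
  R(t, t) w^d on the circle |w| = |t|.  Hence R(x, y) = R(1, x y) off the coordinate axes, and on
  the axes as well because R is a polynomial in each variable separately.
*)
theory Submission
  imports Defs "HOL-Analysis.Elementary_Normed_Spaces"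
begin

lemma carrier_mat_adjoint: "A \<in> carrier_mat n m \<Longrightarrow> mat_adjoint A \<in> carrier_mat m n"
  unfolding mat_adjoint_def by (auto simp: mat_of_rows_def)

lemma index_mat_adjoint:
  "A \<in> carrier_mat n m \<Longrightarrow> i < m \<Longrightarrow> j < n \<Longrightarrow> mat_adjoint A $$ (i, j) = cnj (A $$ (j, i))"
  unfolding mat_adjoint_def by (auto simp: mat_of_rows_def)

lemma poly_eqI_infinite:
  fixes p q :: "'a::idom poly"
  assumes "infinite S" and "\<And>x. x \<in> S \<Longrightarrow> poly p x = poly q x"
  shows "p = q"
proof (rule ccontr)
  assume "p \<noteq> q"
  then have "finite {x. poly (p - q) x = 0}"
    by (intro poly_roots_finite) simp
  moreover have "S \<subseteq> {x. poly (p - q) x = 0}"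
    using assms(2) by auto
  ultimately show False
    using assms(1) finite_subset by blast
qed

lemma poly_eq_if_eq_off_0:
  fixes p q :: "'a::{idom, ring_char_0} poly"
  assumes "\<And>w. w \<noteq> 0 \<Longrightarrow> poly p w = poly q w"
  shows "poly p x = poly q x"
proof -
  have "infinite (UNIV - {0::'a})"
    by (simp add: infinite_UNIV_char_0)
  then show ?thesis
    using poly_eqI_infinite[of "UNIV - {0}" p q] assms by auto
qed

lemma infinite_range_cis_mult:
  assumes "t \<noteq> 0"
  shows "infinite (range (\<lambda>\<theta>. cis \<theta> * t))"
proof
  assume "finite (range (\<lambda>\<theta>. cis \<theta> * t))"
  then have "finite ((\<lambda>\<theta>. cis \<theta> * t) ` {0..pi})"
    by (rule finite_subset[rotated]) auto
  moreover have "inj_on (\<lambda>\<theta>. cis \<theta> * t) {0..pi}"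
  proof (rule inj_onI)
    fix a b assume "a \<in> {0..pi}" "b \<in> {0..pi}" "cis a * t = cis b * t"
    then have "cos a = cos b" "a \<in> {0..pi}" "b \<in> {0..pi}"
      using assms by (auto dest: arg_cong[of _ _ Re])
    then show "a = b"
      using cos_inj_pi by auto
  qed
  ultimately show False
    using finite_imageD infinite_Icc pi_gt_zero by blast
qed

lemma continuous_on_det:
  fixes M :: "'a::topological_space \<Rightarrow> 'b::{comm_ring_1, real_normed_algebra_1} mat"
  assumes "\<And>t. M t \<in> carrier_mat n n"
    and "\<And>i j. i < n \<Longrightarrow> j < n \<Longrightarrow> continuous_on S (\<lambda>t. M t $$ (i, j))"
  shows "continuous_on S (\<lambda>t. det (M t))"
proof -
  have "(\<lambda>t. det (M t))
      = (\<lambda>t. \<Sum>p \<in> {p. p permutes {0..<n}}. signof p * (\<Prod>i = 0..<n. M t $$ (i, p i)))"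
    using det_def'[OF assms(1)] by blast
  then show ?thesis
    by (simp only:) (intro continuous_intros; auto intro: assms(2) permutes_in_image)
qed

lemma finite_char_polys_with_spectrum_in:
  fixes S :: "complex set"
  assumes "finite S"
  shows "finite {char_poly A | A. A \<in> carrier_mat n n \<and> spectrum A \<subseteq> S}"
proof (rule finite_subset)
  show "finite ((\<lambda>as. \<Prod>a\<leftarrow>as. [:- a, 1:]) ` {as. set as \<subseteq> S \<and> length as = n})"
    using finite_lists_length_eq[OF assms] by simp
  show "{char_poly A | A. A \<in> carrier_mat n n \<and> spectrum A \<subseteq> S}
    \<subseteq> (\<lambda>as. \<Prod>a\<leftarrow>as. [:- a, 1:]) ` {as. set as \<subseteq> S \<and> length as = n}"
  proof safe
    fix A :: "complex mat"
    assume A: "A \<in> carrier_mat n n" and "spectrum A \<subseteq> S"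
    obtain as where as: "char_poly A = (\<Prod>a\<leftarrow>as. [:- a, 1:])" "length as = n"
      using char_poly_factorized[OF A] by blast
    have "set as \<subseteq> spectrum A"
    proof
      fix a assume "a \<in> set as"
      then have "poly (char_poly A) a = 0"
        unfolding as(1) by (induct as) auto
      then show "a \<in> spectrum A"
        using spectrum_root_char_poly[OF A] by auto
    qed
    then show "char_poly A \<in> (\<lambda>as. \<Prod>a\<leftarrow>as. [:- a, 1:]) ` {as. set as \<subseteq> S \<and> length as = n}"
      using as \<open>spectrum A \<subseteq> S\<close> by auto
  qed
qed

lemma char_poly_eq_if_spectrum_eq:
  fixes M :: "real \<Rightarrow> complex mat"
  assumes carrier: "\<And>t. M t \<in> carrier_mat n n"
    and cont: "\<And>i j. i < n \<Longrightarrow> j < n \<Longrightarrow> continuous_on UNIV (\<lambda>t. M t $$ (i, j))"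
    and spec: "\<And>s t. spectrum (M s) = spectrum (M t)"
  shows "char_poly (M s) = char_poly (M t)"
proof -
  have "finite (range (\<lambda>t. char_poly (M t)))"
    by (rule finite_subset[OF _ finite_char_polys_with_spectrum_in[OF card_finite_spectrum(1)[OF carrier]]])
      (use carrier spec in blast)
  have "(\<lambda>t. poly (char_poly (M t)) w) constant_on UNIV" for w
  proof (rule continuous_finite_range_constant)
    have entries: "(- char_matrix (M t) w) $$ (i, j) = (if i = j then w else 0) - M t $$ (i, j)"
      if "i < n" "j < n" for t i j
      using that carrier[of t] by (auto simp: char_matrix_def)
    show "continuous_on UNIV (\<lambda>t. poly (char_poly (M t)) w)"
      unfolding char_poly_matrix[OF carrier]
      by (intro continuous_on_det[of _ n]) (simp_all add: carrier entries cont continuous_on_diff)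
    show "finite (range (\<lambda>t. poly (char_poly (M t)) w))"
      using finite_imageI[OF \<open>finite (range (\<lambda>t. char_poly (M t)))\<close>, of "\<lambda>p. poly p w"]
      by (simp add: image_image)
  qed simp
  then have "poly (char_poly (M s)) w = poly (char_poly (M t)) w" for w
    unfolding constant_on_def by (metis UNIV_I)
  then show ?thesis
    using poly_eq_poly_eq_iff by blast
qed

lemma H_mat_carrier: "X \<in> carrier_mat n n \<Longrightarrow> H_mat X \<theta> \<in> carrier_mat n n"
  unfolding H_mat_def using carrier_mat_adjoint[of X n n] by auto

lemma poly_char_poly_H_mat:
  assumes X: "X \<in> carrier_mat n n"
  shows "poly (char_poly (H_mat X \<theta>)) w
    = (1/2) ^ n * det ((2 * w) \<cdot>\<^sub>m 1\<^sub>m n - cis (-\<theta>) \<cdot>\<^sub>m X - cis \<theta> \<cdot>\<^sub>m mat_adjoint X)"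
proof -
  have X': "mat_adjoint X \<in> carrier_mat n n"
    using carrier_mat_adjoint[OF X] .
  have "- char_matrix (H_mat X \<theta>) w
    = (1/2) \<cdot>\<^sub>m ((2 * w) \<cdot>\<^sub>m 1\<^sub>m n - cis (-\<theta>) \<cdot>\<^sub>m X - cis \<theta> \<cdot>\<^sub>m mat_adjoint X)"
    using H_mat_carrier[OF X] X X'
    by (intro eq_matI)
      (auto simp: char_matrix_def H_mat_def index_mat_adjoint right_diff_distrib add_divide_distrib)
  then show ?thesis
    using char_poly_matrix[OF H_mat_carrier[OF X]] X X' by simp
qed

lemma circularity_iff_char_poly_eq:
  assumes X: "X \<in> carrier_mat n n"
  shows "circularity X \<longleftrightarrow> (\<forall>\<theta> \<theta>'. char_poly (H_mat X \<theta>) = char_poly (H_mat X \<theta>'))"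
proof
  assume "circularity X"
  show "\<forall>\<theta> \<theta>'. char_poly (H_mat X \<theta>) = char_poly (H_mat X \<theta>')"
  proof (intro allI char_poly_eq_if_spectrum_eq[of "H_mat X"])
    show "H_mat X t \<in> carrier_mat n n" for t
      using H_mat_carrier[OF X] .
    show "continuous_on UNIV (\<lambda>t. H_mat X t $$ (i, j))" if "i < n" "j < n" for i j
      using that X carrier_mat_adjoint[OF X]
      by (simp add: H_mat_def index_mat_adjoint) (intro continuous_intros; simp)
    show "spectrum (H_mat X s) = spectrum (H_mat X t)" for s t
      using \<open>circularity X\<close> unfolding circularity_def by blast
  qed
next
  assume "\<forall>\<theta> \<theta>'. char_poly (H_mat X \<theta>) = char_poly (H_mat X \<theta>')"
  then show "circularity X"
    unfolding circularity_def spectrum_root_char_poly[OF H_mat_carrier[OF X]] by metis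
qed

lemma circularity_iff_det_rotation_invariant:
  assumes X: "X \<in> carrier_mat n n"
  shows "circularity X \<longleftrightarrow>
    (\<forall>z \<theta> \<theta>'. z \<noteq> 0 \<longrightarrow>
      det (z \<cdot>\<^sub>m 1\<^sub>m n - cis (-\<theta>) \<cdot>\<^sub>m X - cis \<theta> \<cdot>\<^sub>m mat_adjoint X)
        = det (z \<cdot>\<^sub>m 1\<^sub>m n - cis (-\<theta>') \<cdot>\<^sub>m X - cis \<theta>' \<cdot>\<^sub>m mat_adjoint X))"
  unfolding circularity_iff_char_poly_eq[OF X]
proof (intro iffI allI impI)
  fix z :: complex and \<theta> \<theta>' :: real
  assume "\<forall>\<theta> \<theta>'. char_poly (H_mat X \<theta>) = char_poly (H_mat X \<theta>')"
  then have "poly (char_poly (H_mat X \<theta>)) (z / 2) = poly (char_poly (H_mat X \<theta>')) (z / 2)"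
    by metis
  then show "det (z \<cdot>\<^sub>m 1\<^sub>m n - cis (-\<theta>) \<cdot>\<^sub>m X - cis \<theta> \<cdot>\<^sub>m mat_adjoint X)
    = det (z \<cdot>\<^sub>m 1\<^sub>m n - cis (-\<theta>') \<cdot>\<^sub>m X - cis \<theta>' \<cdot>\<^sub>m mat_adjoint X)"
    unfolding poly_char_poly_H_mat[OF X] by simp
next
  fix \<theta> \<theta>' :: real
  assume det_eq: "\<forall>z \<theta> \<theta>'. z \<noteq> 0 \<longrightarrow>
      det (z \<cdot>\<^sub>m 1\<^sub>m n - cis (-\<theta>) \<cdot>\<^sub>m X - cis \<theta> \<cdot>\<^sub>m mat_adjoint X)
        = det (z \<cdot>\<^sub>m 1\<^sub>m n - cis (-\<theta>') \<cdot>\<^sub>m X - cis \<theta>' \<cdot>\<^sub>m mat_adjoint X)"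
  have "poly (char_poly (H_mat X \<theta>)) x = poly (char_poly (H_mat X \<theta>')) x" for x
    by (rule poly_eq_if_eq_off_0) (use det_eq in \<open>simp add: poly_char_poly_H_mat[OF X]\<close>)
  then show "char_poly (H_mat X \<theta>) = char_poly (H_mat X \<theta>')"
    using poly_eq_poly_eq_iff by blast
qed

definition pencil_det :: "complex mat \<Rightarrow> complex mat \<Rightarrow> complex mat \<Rightarrow> complex \<Rightarrow> complex \<Rightarrow> complex"
  where "pencil_det C E D x y = det (1\<^sub>m (dim_row C) - x \<cdot>\<^sub>m C - y \<cdot>\<^sub>m E - (x * y) \<cdot>\<^sub>m D)"

lemma det_linear_pencil_is_poly:
  fixes A B :: "'a::comm_ring_1 mat"
  assumes "A \<in> carrier_mat n n" "B \<in> carrier_mat n n"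
  shows "\<exists>p. \<forall>x. poly p x = det (A + x \<cdot>\<^sub>m B)"
proof (intro exI allI)
  fix x
  show "poly (det (Matrix.mat n n (\<lambda>(i, j). [:A $$ (i, j), B $$ (i, j):]))) x = det (A + x \<cdot>\<^sub>m B)"
    by (rule poly_det_cong[of _ n]) (use assms in \<open>auto simp: algebra_simps\<close>)
qed

lemma det_quadratic_pencil_is_poly:
  fixes A B E :: "'a::comm_ring_1 mat"
  assumes "A \<in> carrier_mat n n" "B \<in> carrier_mat n n" "E \<in> carrier_mat n n"
  shows "\<exists>p. \<forall>x. poly p x = det (A + x \<cdot>\<^sub>m B + x\<^sup>2 \<cdot>\<^sub>m E)"
proof (intro exI allI)
  fix x
  show "poly (det (Matrix.mat n n (\<lambda>(i, j). [:A $$ (i, j), B $$ (i, j), E $$ (i, j):]))) x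
    = det (A + x \<cdot>\<^sub>m B + x\<^sup>2 \<cdot>\<^sub>m E)"
    by (rule poly_det_cong[of _ n]) (use assms in \<open>auto simp: algebra_simps power2_eq_square\<close>)
qed

context
  fixes C E D :: "complex mat" and k :: nat
  assumes C: "C \<in> carrier_mat k k" and E: "E \<in> carrier_mat k k" and D: "D \<in> carrier_mat k k"
begin

lemma pencil_det_poly_in_fst: "\<exists>p. \<forall>x. poly p x = pencil_det C E D x y"
proof -
  have "1\<^sub>m k - y \<cdot>\<^sub>m E \<in> carrier_mat k k" "- C - y \<cdot>\<^sub>m D \<in> carrier_mat k k"
    using C E D by auto
  then obtain p where p: "\<And>x. poly p x = det ((1\<^sub>m k - y \<cdot>\<^sub>m E) + x \<cdot>\<^sub>m (- C - y \<cdot>\<^sub>m D))"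
    using det_linear_pencil_is_poly by blast
  have "1\<^sub>m k - x \<cdot>\<^sub>m C - y \<cdot>\<^sub>m E - (x * y) \<cdot>\<^sub>m D = (1\<^sub>m k - y \<cdot>\<^sub>m E) + x \<cdot>\<^sub>m (- C - y \<cdot>\<^sub>m D)" for x
    by (rule eq_matI) (use C E D in \<open>auto simp: algebra_simps\<close>)
  then have "poly p x = pencil_det C E D x y" for x
    using C by (simp add: p pencil_det_def)
  then show ?thesis
    by blast
qed

lemma pencil_det_poly_in_snd: "\<exists>p. \<forall>y. poly p y = pencil_det C E D x y"
proof -
  have "1\<^sub>m k - x \<cdot>\<^sub>m C \<in> carrier_mat k k" "- E - x \<cdot>\<^sub>m D \<in> carrier_mat k k"
    using C E D by auto
  then obtain p where p: "\<And>y. poly p y = det ((1\<^sub>m k - x \<cdot>\<^sub>m C) + y \<cdot>\<^sub>m (- E - x \<cdot>\<^sub>m D))"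
    using det_linear_pencil_is_poly by blast
  have "1\<^sub>m k - x \<cdot>\<^sub>m C - y \<cdot>\<^sub>m E - (x * y) \<cdot>\<^sub>m D = (1\<^sub>m k - x \<cdot>\<^sub>m C) + y \<cdot>\<^sub>m (- E - x \<cdot>\<^sub>m D)" for y
    by (rule eq_matI) (use C E D in \<open>auto simp: algebra_simps\<close>)
  then have "poly p y = pencil_det C E D x y" for y
    using C by (simp add: p pencil_det_def)
  then show ?thesis
    by blast
qed

lemma pencil_det_poly_on_hyperbola:
  "\<exists>g. \<forall>w. w \<noteq> 0 \<longrightarrow> poly g w = w ^ k * pencil_det C E D w (p / w)"
proof -
  have "- p \<cdot>\<^sub>m E \<in> carrier_mat k k" "1\<^sub>m k - p \<cdot>\<^sub>m D \<in> carrier_mat k k" "- C \<in> carrier_mat k k"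
    using C E D by auto
  then obtain g where g: "\<And>w. poly g w = det ((- p \<cdot>\<^sub>m E) + w \<cdot>\<^sub>m (1\<^sub>m k - p \<cdot>\<^sub>m D) + w\<^sup>2 \<cdot>\<^sub>m (- C))"
    using det_quadratic_pencil_is_poly by blast
  have "w ^ k * pencil_det C E D w (p / w) = poly g w" if "w \<noteq> 0" for w
  proof -
    have "w ^ k * pencil_det C E D w (p / w)
        = det (w \<cdot>\<^sub>m (1\<^sub>m k - w \<cdot>\<^sub>m C - (p / w) \<cdot>\<^sub>m E - (w * (p / w)) \<cdot>\<^sub>m D))"
      using C E D by (simp add: pencil_det_def)
    also have "w \<cdot>\<^sub>m (1\<^sub>m k - w \<cdot>\<^sub>m C - (p / w) \<cdot>\<^sub>m E - (w * (p / w)) \<cdot>\<^sub>m D)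
        = (- p \<cdot>\<^sub>m E) + w \<cdot>\<^sub>m (1\<^sub>m k - p \<cdot>\<^sub>m D) + w\<^sup>2 \<cdot>\<^sub>m (- C)"
      by (rule eq_matI) (use C E D that in \<open>auto simp: algebra_simps power2_eq_square\<close>)
    finally show ?thesis
      by (simp add: g)
  qed
  then show ?thesis
    by metis
qed

lemma pencil_det_constant_on_hyperbola:
  assumes t: "t \<noteq> 0"
    and rot: "\<And>\<theta>. pencil_det C E D (cis (-\<theta>) * t) (cis \<theta> * t) = pencil_det C E D t t"
    and w: "w \<noteq> 0"
  shows "pencil_det C E D w (t\<^sup>2 / w) = pencil_det C E D t t"
proof -
  obtain g where g: "\<And>w. w \<noteq> 0 \<Longrightarrow> poly g w = w ^ k * pencil_det C E D w (t\<^sup>2 / w)"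
    using pencil_det_poly_on_hyperbola by blast
  have "g = Polynomial.smult (pencil_det C E D t t) (monom 1 k)"
  proof (rule poly_eqI_infinite[OF infinite_range_cis_mult[OF t]])
    fix w assume "w \<in> range (\<lambda>\<theta>. cis \<theta> * t)"
    then obtain \<theta> where \<theta>: "w = cis (-\<theta>) * t"
      by (metis (no_types, lifting) imageE minus_minus)
    have "t\<^sup>2 / w = cis \<theta> * t"
      using t by (simp add: \<theta> power2_eq_square field_simps cis_mult flip: cis_divide)
    then show "poly g w = poly (Polynomial.smult (pencil_det C E D t t) (monom 1 k)) w"
      using g[of w] t by (simp add: \<theta> rot poly_monom)
  qed
  then have "poly g w = w ^ k * pencil_det C E D t t"
    by (simp add: poly_monom)
  then show ?thesis
    using g[OF w] w by (metis mult_left_cancel power_not_zero)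
qed

lemma in_poly_xy_pencil_det_iff:
  "in_poly_xy (pencil_det C E D) \<longleftrightarrow>
    (\<forall>t \<theta>. t \<noteq> 0 \<longrightarrow> pencil_det C E D (cis (-\<theta>) * t) (cis \<theta> * t) = pencil_det C E D t t)"
proof (intro iffI allI impI)
  fix t \<theta>
  assume "in_poly_xy (pencil_det C E D)"
  then obtain q where "\<And>x y. pencil_det C E D x y = poly q (x * y)"
    unfolding in_poly_xy_def by blast
  moreover have "cis (-\<theta>) * t * (cis \<theta> * t) = t * t"
    by (simp add: cis_mult mult.left_commute)
  ultimately show "pencil_det C E D (cis (-\<theta>) * t) (cis \<theta> * t) = pencil_det C E D t t"
    by metis
next
  let ?R = "pencil_det C E D"
  assume rot: "\<forall>t \<theta>. t \<noteq> 0 \<longrightarrow> ?R (cis (-\<theta>) * t) (cis \<theta> * t) = ?R t t"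
  obtain q where q: "\<And>y. poly q y = ?R 1 y"
    using pencil_det_poly_in_snd by blast
  have off_axes: "?R x y = poly q (x * y)" if "x \<noteq> 0" "y \<noteq> 0" for x y
  proof -
    define t where "t = csqrt (x * y)"
    have t2: "t\<^sup>2 = x * y"
      unfolding t_def by simp
    then have "t \<noteq> 0"
      using that by auto
    then have "?R x (t\<^sup>2 / x) = ?R 1 (t\<^sup>2 / 1)"
      using pencil_det_constant_on_hyperbola rot \<open>x \<noteq> 0\<close> by (metis one_neq_zero)
    then show ?thesis
      using \<open>x \<noteq> 0\<close> by (simp add: t2 q)
  qed
  have off_snd_axis: "?R x y = poly q (x * y)" if "y \<noteq> 0" for x y
  proof -
    obtain p where p: "\<And>x. poly p x = ?R x y"
      using pencil_det_poly_in_fst by blast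
    have "poly p x = poly (q \<circ>\<^sub>p [:0, y:]) x"
      by (rule poly_eq_if_eq_off_0) (simp add: p off_axes \<open>y \<noteq> 0\<close> poly_pcompose mult.commute)
    then show ?thesis
      by (simp add: p poly_pcompose mult.commute)
  qed
  have "?R x y = poly q (x * y)" for x y
  proof -
    obtain p where p: "\<And>y. poly p y = ?R x y"
      using pencil_det_poly_in_snd by blast
    have "poly p y = poly (q \<circ>\<^sub>p [:0, x:]) y"
      by (rule poly_eq_if_eq_off_0) (simp add: p off_snd_axis poly_pcompose mult.commute)
    then show ?thesis
      by (simp add: p poly_pcompose mult.commute)
  qed
  then show "in_poly_xy ?R"
    unfolding in_poly_xy_def by blast
qed

lemma circularity_iff_in_poly_xy_pencil_det:
  assumes X: "X \<in> carrier_mat n n"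
    and char: "\<And>z \<theta>. z \<noteq> 0 \<Longrightarrow>
      det (z \<cdot>\<^sub>m 1\<^sub>m n - cis (-\<theta>) \<cdot>\<^sub>m X - cis \<theta> \<cdot>\<^sub>m mat_adjoint X)
        = z ^ n * pencil_det C E D (cis (-\<theta>) / z) (cis \<theta> / z)"
  shows "circularity X \<longleftrightarrow> in_poly_xy (pencil_det C E D)"
proof -
  let ?R = "pencil_det C E D"
  have "(\<forall>z \<theta> \<theta>'. z \<noteq> 0 \<longrightarrow> ?R (cis (-\<theta>) / z) (cis \<theta> / z) = ?R (cis (-\<theta>') / z) (cis \<theta>' / z))
    \<longleftrightarrow> (\<forall>t \<theta> \<theta>'. t \<noteq> 0 \<longrightarrow> ?R (cis (-\<theta>) * t) (cis \<theta> * t) = ?R (cis (-\<theta>') * t) (cis \<theta>' * t))"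
    by (metis divide_inverse inverse_inverse_eq inverse_nonzero_iff_nonzero)
  also have "\<dots> \<longleftrightarrow> (\<forall>t \<theta>. t \<noteq> 0 \<longrightarrow> ?R (cis (-\<theta>) * t) (cis \<theta> * t) = ?R t t)"
    by (metis cis_zero minus_zero mult_1)
  finally show ?thesis
    unfolding circularity_iff_det_rotation_invariant[OF X] in_poly_xy_pencil_det_iff
    by (simp add: char)
qed

end

lemma det_four_block_mat_scalar_upper_left:
  fixes z :: "'a::field"
  assumes z: "z \<noteq> 0" and B: "B \<in> carrier_mat n m" and C: "C \<in> carrier_mat m n"
    and W: "W \<in> carrier_mat m m"
  shows "det (four_block_mat (z \<cdot>\<^sub>m 1\<^sub>m n) B C W) = z ^ n * det (W - (1 / z) \<cdot>\<^sub>m (C * B))"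
proof -
  define M where "M = four_block_mat (z \<cdot>\<^sub>m 1\<^sub>m n) B C W"
  define L where "L = four_block_mat (1\<^sub>m n) (0\<^sub>m n m) ((- 1 / z) \<cdot>\<^sub>m C) (1\<^sub>m m)"
  have L: "L \<in> carrier_mat (n + m) (n + m)"
    unfolding L_def using C by auto
  have "det L = 1"
    unfolding L_def using C by (subst det_four_block_mat_upper_right_zero[of _ n _ m]) auto
  have "L * M
      = four_block_mat (1\<^sub>m n * (z \<cdot>\<^sub>m 1\<^sub>m n) + 0\<^sub>m n m * C) (1\<^sub>m n * B + 0\<^sub>m n m * W)
          ((- 1 / z) \<cdot>\<^sub>m C * (z \<cdot>\<^sub>m 1\<^sub>m n) + 1\<^sub>m m * C) ((- 1 / z) \<cdot>\<^sub>m C * B + 1\<^sub>m m * W)"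
    unfolding L_def M_def by (rule mult_four_block_mat) (use B C W in auto)
  also have "\<dots> = four_block_mat (z \<cdot>\<^sub>m 1\<^sub>m n) B (0\<^sub>m m n) (W - (1 / z) \<cdot>\<^sub>m (C * B))"
  proof (rule cong_four_block_mat)
    show "(- 1 / z) \<cdot>\<^sub>m C * (z \<cdot>\<^sub>m 1\<^sub>m n) + 1\<^sub>m m * C = 0\<^sub>m m n"
      using z C by (intro eq_matI) (auto simp: mult_smult_assoc_mat mult_smult_distrib)
    show "(- 1 / z) \<cdot>\<^sub>m C * B + 1\<^sub>m m * W = W - (1 / z) \<cdot>\<^sub>m (C * B)"
      using B C W by (intro eq_matI) (auto simp: mult_smult_assoc_mat)
  qed (use B C W in auto)
  finally have block_triangular: "L * M = four_block_mat (z \<cdot>\<^sub>m 1\<^sub>m n) B (0\<^sub>m m n) (W - (1 / z) \<cdot>\<^sub>m (C * B))" .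
  have "det M = det (L * M)"
    using det_mult[OF L, of M] \<open>det L = 1\<close> B C W unfolding M_def by simp
  also have "\<dots> = det (z \<cdot>\<^sub>m 1\<^sub>m n) * det (W - (1 / z) \<cdot>\<^sub>m (C * B))"
    unfolding block_triangular by (rule det_four_block_mat_lower_left_zero) (use B C W in auto)
  finally show ?thesis
    unfolding M_def by simp
qed

lemma adjoint_mult_self_eq_D_C:
  assumes B: "B \<in> carrier_mat m d" and C: "C \<in> carrier_mat d d"
    and isometry: "mat_adjoint B * B + mat_adjoint C * C = 1\<^sub>m d"
  shows "mat_adjoint B * B = D_C C"
proof -
  have "mat_adjoint B * B = (mat_adjoint B * B + mat_adjoint C * C) - mat_adjoint C * C"
    using carrier_mat_adjoint[OF B] carrier_mat_adjoint[OF C] B C by (intro eq_matI) auto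
  then show ?thesis
    unfolding D_C_def isometry using C by simp
qed

lemma Q_C_eq_pencil_det: "Q_C C = pencil_det C (mat_adjoint C) (D_C C)"
  by (simp add: fun_eq_iff Q_C_def pencil_det_def)

lemma P_C_eq_pencil_det:
  assumes C: "C \<in> carrier_mat d d"
  shows "P_C C = pencil_det C (mat_adjoint C) (0\<^sub>m d d)"
proof -
  have "1\<^sub>m d - x \<cdot>\<^sub>m C - y \<cdot>\<^sub>m mat_adjoint C - (x * y) \<cdot>\<^sub>m 0\<^sub>m d d
      = 1\<^sub>m d - x \<cdot>\<^sub>m C - y \<cdot>\<^sub>m mat_adjoint C" for x y
    using C carrier_mat_adjoint[OF C] by (intro eq_matI) auto
  then show ?thesis
    using C by (simp add: fun_eq_iff P_C_def pencil_det_def)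
qed

lemma det_rotated_pencil_eq_P_C:
  assumes C: "C \<in> carrier_mat d d" and z: "z \<noteq> 0"
  shows "det (z \<cdot>\<^sub>m 1\<^sub>m d - a \<cdot>\<^sub>m C - b \<cdot>\<^sub>m mat_adjoint C) = z ^ d * P_C C (a / z) (b / z)"
proof -
  have "z \<cdot>\<^sub>m 1\<^sub>m d - a \<cdot>\<^sub>m C - b \<cdot>\<^sub>m mat_adjoint C
      = z \<cdot>\<^sub>m (1\<^sub>m d - (a / z) \<cdot>\<^sub>m C - (b / z) \<cdot>\<^sub>m mat_adjoint C)"
    using C carrier_mat_adjoint[OF C] z by (intro eq_matI) (auto simp: field_simps)
  then show ?thesis
    using C carrier_mat_adjoint[OF C] by (simp add: P_C_def)
qed

lemma det_rotated_pencil_eq_Q_C: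
  assumes B: "B \<in> carrier_mat m d" and C: "C \<in> carrier_mat d d"
    and isometry: "mat_adjoint B * B + mat_adjoint C * C = 1\<^sub>m d"
    and A: "A = four_block_mat (0\<^sub>m m m) B (0\<^sub>m d m) C" and z: "z \<noteq> 0"
  shows "det (z \<cdot>\<^sub>m 1\<^sub>m (m + d) - a \<cdot>\<^sub>m A - b \<cdot>\<^sub>m mat_adjoint A) = z ^ (m + d) * Q_C C (a / z) (b / z)"
proof -
  have A_carrier: "A \<in> carrier_mat (m + d) (m + d)"
    unfolding A using B C by auto
  note B' = carrier_mat_adjoint[OF B] and C' = carrier_mat_adjoint[OF C]
    and A' = carrier_mat_adjoint[OF A_carrier]
  define W where "W = z \<cdot>\<^sub>m 1\<^sub>m d - a \<cdot>\<^sub>m C - b \<cdot>\<^sub>m mat_adjoint C"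
  have W: "W \<in> carrier_mat d d"
    unfolding W_def using C C' by auto
  have D: "D_C C \<in> carrier_mat d d"
    unfolding D_C_def using C C' by auto
  have "z \<cdot>\<^sub>m 1\<^sub>m (m + d) - a \<cdot>\<^sub>m A - b \<cdot>\<^sub>m mat_adjoint A
      = four_block_mat (z \<cdot>\<^sub>m 1\<^sub>m m) ((- a) \<cdot>\<^sub>m B) ((- b) \<cdot>\<^sub>m mat_adjoint B) W"
  proof (rule eq_matI)
    fix i j assume "i < dim_row (four_block_mat (z \<cdot>\<^sub>m 1\<^sub>m m) ((- a) \<cdot>\<^sub>m B) ((- b) \<cdot>\<^sub>m mat_adjoint B) W)"
      and "j < dim_col (four_block_mat (z \<cdot>\<^sub>m 1\<^sub>m m) ((- a) \<cdot>\<^sub>m B) ((- b) \<cdot>\<^sub>m mat_adjoint B) W)"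
    then have i: "i < m + d" and j: "j < m + d"
      using B B' W by auto
    show "(z \<cdot>\<^sub>m 1\<^sub>m (m + d) - a \<cdot>\<^sub>m A - b \<cdot>\<^sub>m mat_adjoint A) $$ (i, j)
      = four_block_mat (z \<cdot>\<^sub>m 1\<^sub>m m) ((- a) \<cdot>\<^sub>m B) ((- b) \<cdot>\<^sub>m mat_adjoint B) W $$ (i, j)"
    proof -
      have "(z \<cdot>\<^sub>m 1\<^sub>m (m + d) - a \<cdot>\<^sub>m A - b \<cdot>\<^sub>m mat_adjoint A) $$ (i, j)
          = z * 1\<^sub>m (m + d) $$ (i, j) - a * A $$ (i, j) - b * cnj (A $$ (j, i))"
        using i j A_carrier A' by (simp add: index_mat_adjoint[OF A_carrier i j])
      then show ?thesis
        using i j B B' C C'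
        by (simp add: index_mat_adjoint[OF B] index_mat_adjoint[OF C] A W_def) arith
    qed
  qed (use A_carrier A' B B' W in auto)
  moreover have "W - (1 / z) \<cdot>\<^sub>m ((- b) \<cdot>\<^sub>m mat_adjoint B * ((- a) \<cdot>\<^sub>m B))
      = z \<cdot>\<^sub>m (1\<^sub>m d - (a / z) \<cdot>\<^sub>m C - (b / z) \<cdot>\<^sub>m mat_adjoint C - ((a / z) * (b / z)) \<cdot>\<^sub>m D_C C)"
  proof -
    have "(- b) \<cdot>\<^sub>m mat_adjoint B * ((- a) \<cdot>\<^sub>m B) = (- b) \<cdot>\<^sub>m ((- a) \<cdot>\<^sub>m (mat_adjoint B * B))"
      by (simp add: mult_smult_assoc_mat[OF B' smult_carrier_mat[OF B]] mult_smult_distrib[OF B' B])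
    also have "\<dots> = (a * b) \<cdot>\<^sub>m D_C C"
      unfolding adjoint_mult_self_eq_D_C[OF B C isometry] using D by (intro eq_matI) auto
    finally show ?thesis
      unfolding W_def using C C' D z by (intro eq_matI) (auto simp: field_simps)
  qed
  ultimately show ?thesis
    using det_four_block_mat_scalar_upper_left[OF z, of "(- a) \<cdot>\<^sub>m B" m d "(- b) \<cdot>\<^sub>m mat_adjoint B" W]
      B B' W D C C'
    by (simp add: Q_C_def power_add)
qed

theorem mainTheorem8:
  fixes m d :: nat and B C :: "complex mat"
  assumes "B \<in> carrier_mat m d" and "C \<in> carrier_mat d d"
    and "mat_adjoint B * B + mat_adjoint C * C = 1\<^sub>m d"
  defines "A \<equiv> four_block_mat (0\<^sub>m m m) B (0\<^sub>m d m) C"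
  shows "(\<forall>z \<theta>. z \<noteq> 0 \<longrightarrow>
            det (z \<cdot>\<^sub>m 1\<^sub>m (m + d) - cis (-\<theta>) \<cdot>\<^sub>m A - cis \<theta> \<cdot>\<^sub>m mat_adjoint A)
              = z ^ (m + d) * Q_C C (cis (-\<theta>) / z) (cis \<theta> / z))
       \<and> (\<forall>z \<theta>. z \<noteq> 0 \<longrightarrow>
            det (z \<cdot>\<^sub>m 1\<^sub>m d - cis (-\<theta>) \<cdot>\<^sub>m C - cis \<theta> \<cdot>\<^sub>m mat_adjoint C)
              = z ^ d * P_C C (cis (-\<theta>) / z) (cis \<theta> / z))
       \<and> (circularity A \<longleftrightarrow> in_poly_xy (Q_C C))
       \<and> (circularity C \<longleftrightarrow> in_poly_xy (P_C C))"
proof (intro conjI allI impI)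
  note B = assms(1) and C = assms(2) and isometry = assms(3)
  have A_carrier: "A \<in> carrier_mat (m + d) (m + d)"
    unfolding A_def using B C by auto
  have C': "mat_adjoint C \<in> carrier_mat d d" and D: "D_C C \<in> carrier_mat d d"
    using carrier_mat_adjoint[OF C] C by (auto simp: D_C_def)
  note Q = det_rotated_pencil_eq_Q_C[OF B C isometry A_def[THEN meta_eq_to_obj_eq]]
  note P = det_rotated_pencil_eq_P_C[OF C]
  show "det (z \<cdot>\<^sub>m 1\<^sub>m (m + d) - cis (-\<theta>) \<cdot>\<^sub>m A - cis \<theta> \<cdot>\<^sub>m mat_adjoint A)
    = z ^ (m + d) * Q_C C (cis (-\<theta>) / z) (cis \<theta> / z)" if "z \<noteq> 0" for z \<theta>
    using Q[OF that] .
  show "det (z \<cdot>\<^sub>m 1\<^sub>m d - cis (-\<theta>) \<cdot>\<^sub>m C - cis \<theta> \<cdot>\<^sub>m mat_adjoint C)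
    = z ^ d * P_C C (cis (-\<theta>) / z) (cis \<theta> / z)" if "z \<noteq> 0" for z \<theta>
    using P[OF that] .
  show "circularity A \<longleftrightarrow> in_poly_xy (Q_C C)"
    unfolding Q_C_eq_pencil_det
    by (rule circularity_iff_in_poly_xy_pencil_det[OF C C' D A_carrier])
      (simp add: Q Q_C_eq_pencil_det)
  show "circularity C \<longleftrightarrow> in_poly_xy (P_C C)"
    unfolding P_C_eq_pencil_det[OF C]
    by (rule circularity_iff_in_poly_xy_pencil_det[OF C C' zero_carrier_mat C])
      (simp add: P P_C_eq_pencil_det[OF C])
qed

end
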